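(* Let $\mathscr T$ be a triangulation of $\Pi$ with $\mathscr T_{ijk}^{rst}\subseteq\mathscr T$ for some distinct $i,j,k\in[4]$ and $r,s,t\in\{-N,\dots,N\}$. Let $\mathscr T'$ be the result of a flip on $\mathscr T$ supported on a circuit $(X^+,X^-)$ of $\Pi$ with $X\neq X_{ijk}^{rst}$. Then $\mathscr T_{ijk}^{rst}\subseteq\mathscr T'$.
   Context: General conventions. For a finite point set $A\subset\mathbb R^d$: a cell is a subset of $A$; a simplex is an affinely independent cell; a face of a cell $C$ is a subset $F\subseteq C$ which is the set of minimizers on $C$ of some linear functional. A triangulation of $A$ is a collection $\mathscr T$ of simplices of $A$, closed under taking faces, such that for all $\sigma,\sigma'\in\mathscr T$, $\mathrm{conv}(\sigma)\cap\mathrm{conv}(\sigma')=\mathrm{conv}(F)$ for a common face $F$ of $\sigma$ and $\sigma'$, and such that $\bigcup_{\sigma\in\mathscr T}\mathrm{conv}(\sigma)=\mathrm{conv}(A)$. A circuit is a minimal affinely dependent subset $X$; it satisfies an affine dependence $\sum_{x\in X}\lambda_x x=0$, $\sum\lambda_x=0$, all $\lambda_x\neq0$, unique up to scaling, which partitions $X=X^+\cup X^-$ into the points with positive and with negative coefficients; writing $X=(X^+,X^-)$ fixes a choice of sign. Set $\mathscr T_X^+:=\{\sigma\subseteq X:X^+\not\subseteq\sigma\}$ and $\mathscr T_X^-:=\{\sigma\subseteq X:X^-\not\subseteq\sigma\}$. For $C\in\mathscr T$, $\mathrm{link}_{\mathscr T}(C):=\{C'\in\mathscr T: C\cap C'=\emptyset,\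 C\cup C'\in\mathscr T\}$. A triangulation $\mathscr T$ of $A$ has a flip supported on the circuit $(X^+,X^-)$, $X\subseteq A$, if $\mathscr T_X^+\subseteq\mathscr T$ and all inclusion-maximal elements of $\mathscr T_X^+$ have the same link $\mathscr L$ in $\mathscr T$; the result of the flip is the triangulation $(\mathscr T\setminus\{\rho\cup\sigma:\rho\in\mathscr L,\sigma\in\mathscr T_X^+\})\cup\{\rho\cup\sigma:\rho\in\mathscr L,\sigma\in\mathscr T_X^-\}$. The point set $\Pi$. Let $N\ge1$ and let $e_1,\dots,e_4$ be the standard basis of $\mathbb R^4$. For distinct $i,j\in[4]$ and integers $-N\le r\le N$ introduce symbols $f_{ij}^r$ with the identification $f_{ij}^r=f_{ji}^{-r}$; the distinct symbols $\{f_{ij}^r\}_{1\le i<j\le4,\,-N\le r\le N}$ form the standard basis of $\mathbb R^{6(2N+1)}$. Set $\Pi:=\bigcup_{1\le i<j\le4}\bigcup_{-N\le r\le N}\{(e_i,f_{ij}^r),(e_j,f_{ij}^r)\}$. For distinct $i,j,k\in[4]$ and $r,s,t\in\{-N,\dots,N\}$, $X_{ijk}^{rst}=((X_{ijk}^{rst})^+,(X_{ijk}^{rst})^-)$ is the circuit of $\Pi$ with affine dependence $(e_i,f_{ij}^r)-(e_j,f_{ij}^r)+(e_j,f_{jk}^s)-(e_k,f_{jk}^s)+(e_k,f_{ki}^t)-(e_i,f_{ki}^t)=0$, with $+$ and $-$ parts read off from these signs, and $\mathscr T_{ijk}^{rst}:=\mathscr T^+_{X_{ijk}^{rst}}$.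 *)

theory Defs
  imports "HOL-Analysis.Analysis" "HOL-Library.Function_Algebras"
begin

instantiation "fun" :: (type, real_vector) real_vector
begin
definition scaleR_fun :: "real \<Rightarrow> ('a \<Rightarrow> 'b) \<Rightarrow> 'a \<Rightarrow> 'b"
  where "scaleR_fun c f = (\<lambda>x. c *\<^sub>R f x)"
instance
  by standard (auto simp: scaleR_fun_def fun_eq_iff scaleR_add_right scaleR_add_left)
end

text \<open>The empty set is also admitted as a face (standard convention; needed so that
  disjoint simplices meet in the convex hull of a common face).\<close>
definition is_face :: "'a::real_vector set \<Rightarrow> 'a set \<Rightarrow> bool" where
  "is_face C F \<longleftrightarrow> F = {} \<or>
     (\<exists>l::'a \<Rightarrow> real. linear l \<and> F = {x \<in> C. \<forall>y\<in>C. l x \<le> l y})"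

definition is_simplex :: "'a::real_vector set \<Rightarrow> bool" where
  "is_simplex \<sigma> \<longleftrightarrow> finite \<sigma> \<and> \<not> affine_dependent \<sigma>"

definition is_triangulation :: "'a::real_vector set \<Rightarrow> 'a set set \<Rightarrow> bool" where
  "is_triangulation A T \<longleftrightarrow>
     (\<forall>\<sigma>\<in>T. \<sigma> \<subseteq> A \<and> is_simplex \<sigma>) \<and>
     (\<forall>\<sigma>\<in>T. \<forall>F. is_face \<sigma> F \<longrightarrow> F \<in> T) \<and>
     (\<forall>\<sigma>\<in>T. \<forall>\<sigma>'\<in>T. \<exists>F. is_face \<sigma> F \<and> is_face \<sigma>' F \<and>
         convex hull \<sigma> \<inter> convex hull \<sigma>' = convex hull F) \<and>
     (\<Union>\<sigma>\<in>T. convex hull \<sigma>) = convex hull A"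

definition is_circuit_set :: "'a::real_vector set \<Rightarrow> 'a set \<Rightarrow> bool" where
  "is_circuit_set A X \<longleftrightarrow> X \<subseteq> A \<and> affine_dependent X \<and>
     (\<forall>Y. Y \<subset> X \<longrightarrow> \<not> affine_dependent Y)"

definition is_signed_circuit :: "'a::real_vector set \<Rightarrow> 'a set \<Rightarrow> 'a set \<Rightarrow> bool" where
  "is_signed_circuit A Xp Xm \<longleftrightarrow> is_circuit_set A (Xp \<union> Xm) \<and>
     (\<exists>c::'a \<Rightarrow> real. (\<forall>x\<in>Xp \<union> Xm. c x \<noteq> 0) \<and>
        (\<Sum>x\<in>Xp \<union> Xm. c x) = 0 \<and> (\<Sum>x\<in>Xp \<union> Xm. c x *\<^sub>R x) = 0 \<and>
        Xp = {x \<in> Xp \<union> Xm. c x > 0} \<and> Xm = {x \<in> Xp \<union> Xm. c x < 0})"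

definition T_plus :: "'a set \<Rightarrow> 'a set \<Rightarrow> 'a set set" where
  "T_plus Xp Xm = {\<sigma>. \<sigma> \<subseteq> Xp \<union> Xm \<and> \<not> Xp \<subseteq> \<sigma>}"

definition T_minus :: "'a set \<Rightarrow> 'a set \<Rightarrow> 'a set set" where
  "T_minus Xp Xm = {\<sigma>. \<sigma> \<subseteq> Xp \<union> Xm \<and> \<not> Xm \<subseteq> \<sigma>}"

definition link :: "'a set set \<Rightarrow> 'a set \<Rightarrow> 'a set set" where
  "link T C = {C' \<in> T. C \<inter> C' = {} \<and> C \<union> C' \<in> T}"

definition maximal_in :: "'a set set \<Rightarrow> 'a set \<Rightarrow> bool" where
  "maximal_in S \<sigma> \<longleftrightarrow> \<sigma> \<in> S \<and> (\<forall>\<tau>\<in>S. \<sigma> \<subseteq> \<tau> \<longrightarrow> \<tau> = \<sigma>)"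

definition flip_with_link :: "'a set set \<Rightarrow> 'a set \<Rightarrow> 'a set \<Rightarrow> 'a set set \<Rightarrow> bool" where
  "flip_with_link T Xp Xm L \<longleftrightarrow> T_plus Xp Xm \<subseteq> T \<and>
     (\<forall>\<sigma>. maximal_in (T_plus Xp Xm) \<sigma> \<longrightarrow> link T \<sigma> = L)"

definition flip_result :: "'a set set \<Rightarrow> 'a set \<Rightarrow> 'a set \<Rightarrow> 'a set set \<Rightarrow> 'a set set" where
  "flip_result T Xp Xm L =
     (T - {\<rho> \<union> \<sigma> | \<rho> \<sigma>. \<rho> \<in> L \<and> \<sigma> \<in> T_plus Xp Xm})
       \<union> {\<rho> \<union> \<sigma> | \<rho> \<sigma>. \<rho> \<in> L \<and> \<sigma> \<in> T_minus Xp Xm}"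

text \<open>Coordinates: E i is the basis vector e_i (i \<in> [4]); F i j r with i < j is the
  basis vector f_ij^r. The symbol f_ij^r for i > j is identified with f_ji^(-r).\<close>
datatype coord = E nat | F nat nat int

definition fsym :: "nat \<Rightarrow> nat \<Rightarrow> int \<Rightarrow> coord" where
  "fsym i j r = (if i < j then F i j r else F j i (- r))"

definition pt :: "nat \<Rightarrow> nat \<Rightarrow> nat \<Rightarrow> int \<Rightarrow> coord \<Rightarrow> real" where
  "pt a i j r = (\<lambda>c. if c = E a \<or> c = fsym i j r then 1 else 0)"

definition Pi_set :: "nat \<Rightarrow> (coord \<Rightarrow> real) set" where
  "Pi_set N = {pt a i j r | a i j r. i \<in> {1..4} \<and> j \<in> {1..4} \<and> i < j \<and>
                 \<bar>r\<bar> \<le> int N \<and> (a = i \<or> a = j)}"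

text \<open>The circuit X_ijk^rst with dependence
  (e_i,f_ij^r) - (e_j,f_ij^r) + (e_j,f_jk^s) - (e_k,f_jk^s) + (e_k,f_ki^t) - (e_i,f_ki^t) = 0.\<close>
definition Xp_ijk :: "nat \<Rightarrow> nat \<Rightarrow> nat \<Rightarrow> int \<Rightarrow> int \<Rightarrow> int \<Rightarrow> (coord \<Rightarrow> real) set" where
  "Xp_ijk i j k r s t = {pt i i j r, pt j j k s, pt k k i t}"

definition Xm_ijk :: "nat \<Rightarrow> nat \<Rightarrow> nat \<Rightarrow> int \<Rightarrow> int \<Rightarrow> int \<Rightarrow> (coord \<Rightarrow> real) set" where
  "Xm_ijk i j k r s t = {pt j i j r, pt k j k s, pt i k i t}"

definition T_ijk :: "nat \<Rightarrow> nat \<Rightarrow> nat \<Rightarrow> int \<Rightarrow> int \<Rightarrow> int \<Rightarrow> (coord \<Rightarrow> real) set set" where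
  "T_ijk i j k r s t = T_plus (Xp_ijk i j k r s t) (Xm_ijk i j k r s t)"

end

theory Submission imports Defs begin

text \<open>A coefficient vector c of an affine dependence on a subset X of \<open>\<Pi>\<close> is balanced in
  every coordinate. Each point of \<open>\<Pi>\<close> has exactly two nonzero coordinates, e_a and f_ij^r,
  and the coordinate f_ij^r is nonzero only at (e_i, f_ij^r) and (e_j, f_ij^r); so these two
  points occur together in X with opposite coefficients. A point with positive coefficient
  and coordinate e_a = 1 forces a point with negative coefficient and e_a = 1. If the
  negative coefficients lie on the hexagon X_ijk^rst, these two rules walk around the
  hexagon from any one of its points and show X_ijk^rst \<subseteq> X. For a circuit X this
  contradicts minimality, since X_ijk^rst is itself dependent. Hence X^- \<subseteq> X_ijk^rst
  is impossible for every circuit X \<noteq> X_ijk^rst, and a flip on X cannot remove any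
  simplex contained in X_ijk^rst.\<close>

abbreviation X_ijk :: "nat \<Rightarrow> nat \<Rightarrow> nat \<Rightarrow> int \<Rightarrow> int \<Rightarrow> int \<Rightarrow> (coord \<Rightarrow> real) set" where
  "X_ijk i j k r s t \<equiv> Xp_ijk i j k r s t \<union> Xm_ijk i j k r s t"

lemma is_circuit_set_finite:
  assumes "is_circuit_set A X"
  shows "finite X"
proof (rule ccontr)
  assume "infinite X"
  obtain S U where S: "finite S" "S \<subseteq> X" "sum U S = 0" "\<exists>v\<in>S. U v \<noteq> 0"
    "(\<Sum>v\<in>S. U v *\<^sub>R v) = 0"
    using assms by (auto simp: is_circuit_set_def affine_dependent_explicit)
  then have "affine_dependent S"
    by (auto simp: affine_dependent_explicit)
  moreover have "S \<subset> X"
    using S(1,2) \<open>infinite X\<close> by auto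
  ultimately show False
    using assms by (auto simp: is_circuit_set_def)
qed

lemma is_signed_circuit_dependence:
  assumes "is_signed_circuit A Xp Xm"
  obtains c where "\<And>x. x \<in> Xp \<union> Xm \<Longrightarrow> c x \<noteq> 0" "(\<Sum>x\<in>Xp \<union> Xm. c x) = 0"
    "(\<Sum>x\<in>Xp \<union> Xm. c x *\<^sub>R x) = 0" "\<And>x. x \<in> Xm \<longleftrightarrow> x \<in> Xp \<union> Xm \<and> c x < 0"
proof -
  obtain c where c: "\<forall>x\<in>Xp \<union> Xm. c x \<noteq> 0" "(\<Sum>x\<in>Xp \<union> Xm. c x) = 0"
    "(\<Sum>x\<in>Xp \<union> Xm. c x *\<^sub>R x) = 0" and Xm: "Xm = {x \<in> Xp \<union> Xm. c x < 0}"
    using assms unfolding is_signed_circuit_def by blast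
  show ?thesis
  proof (rule that)
    show "x \<in> Xm \<longleftrightarrow> x \<in> Xp \<union> Xm \<and> c x < 0" for x
      using arg_cong[OF Xm, of "\<lambda>S. x \<in> S"] by (simp only: mem_Collect_eq)
  qed (use c in auto)
qed

lemma is_signed_circuit_negative_nonempty:
  assumes "is_signed_circuit A Xp Xm"
  shows "Xm \<noteq> {}"
proof
  assume "Xm = {}"
  obtain c where c: "\<And>x. x \<in> Xp \<union> Xm \<Longrightarrow> c x \<noteq> 0" "(\<Sum>x\<in>Xp \<union> Xm. c x) = 0"
    "(\<Sum>x\<in>Xp \<union> Xm. c x *\<^sub>R x) = 0" "\<And>x. x \<in> Xm \<longleftrightarrow> x \<in> Xp \<union> Xm \<and> c x < 0"
    using is_signed_circuit_dependence[OF assms] by blast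
  have circ: "is_circuit_set A (Xp \<union> Xm)"
    using assms by (simp add: is_signed_circuit_def)
  then have "Xp \<union> Xm \<noteq> {}"
    unfolding is_circuit_set_def using affine_independent_0 by metis
  then obtain y where y: "y \<in> Xp \<union> Xm"
    by blast
  have pos: "0 < c x" if "x \<in> Xp \<union> Xm" for x
  proof -
    have "\<not> c x < 0"
      using c(4)[of x] that \<open>Xm = {}\<close> by blast
    with c(1)[OF that] show ?thesis
      by linarith
  qed
  have "0 < (\<Sum>x\<in>Xp \<union> Xm. c x)"
    using is_circuit_set_finite[OF circ] y pos by (intro sum_pos2) (auto simp: less_imp_le)
  with c(2) show False
    by simp
qed

lemma flip_result_keeps:
  assumes "\<tau> \<in> T" "\<tau> \<subseteq> Y" "\<not> Xm \<subseteq> Y"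
  shows "\<tau> \<in> flip_result T Xp Xm L"
proof (cases "\<exists>\<rho> \<sigma>. \<tau> = \<rho> \<union> \<sigma> \<and> \<rho> \<in> L \<and> \<sigma> \<in> T_plus Xp Xm")
  case False
  with assms(1) show ?thesis
    by (auto simp: flip_result_def)
next
  case True
  then obtain \<rho> \<sigma> where \<tau>: "\<tau> = \<rho> \<union> \<sigma>" "\<rho> \<in> L" "\<sigma> \<in> T_plus Xp Xm"
    by blast
  have "\<not> Xm \<subseteq> \<sigma>"
    using \<tau>(1) assms(2,3) by blast
  with \<tau>(3) have "\<sigma> \<in> T_minus Xp Xm"
    by (simp add: T_plus_def T_minus_def)
  with \<tau>(1,2) show ?thesis
    unfolding flip_result_def by blast
qed

lemma sum_scaleR_fun_apply:
  fixes X :: "('a \<Rightarrow> real) set"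
  assumes "finite X"
  shows "(\<Sum>x\<in>X. c x *\<^sub>R x) q = (\<Sum>x\<in>X. c x * x q)"
  using assms by (induction rule: finite_induct) (auto simp: scaleR_fun_def)

lemma fsym_ne_E [simp]: "fsym i j r \<noteq> E a" "E a \<noteq> fsym i j r"
  by (auto simp: fsym_def)

lemma pt_E [simp]: "pt a i j r (E b) = (if b = a then 1 else 0)"
  by (auto simp: pt_def)

lemma pt_fsym [simp]: "pt a i j r (fsym i j r) = 1"
  by (auto simp: pt_def)

lemma pt_swap: "i \<noteq> j \<Longrightarrow> pt a i j (- r) = pt a j i r"
  by (auto simp: pt_def fsym_def fun_eq_iff)

lemma pt_apply: "pt a i j r q = (if q = E a then 1 else 0) + (if q = fsym i j r then 1 else 0)"
  by (auto simp: pt_def)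

lemma fsym_eq_imp_same_pair: "fsym i j r = fsym u v w \<Longrightarrow> i \<noteq> j \<Longrightarrow> u \<noteq> v \<Longrightarrow> {i, j} = {u, v}"
  by (auto simp: fsym_def split: if_splits)

lemma Pi_set_finite: "finite (Pi_set N)"
proof -
  have "Pi_set N \<subseteq> (\<lambda>(a, i, j, r). pt a i j r) ` ({1..4} \<times> {1..4} \<times> {1..4} \<times> {-int N..int N})"
    unfolding Pi_set_def by (force simp: image_iff)
  then show ?thesis
    by (rule finite_subset) auto
qed

lemma Pi_set_coord_01: "x \<in> Pi_set N \<Longrightarrow> x q = 0 \<or> x q = 1"
  by (auto simp: Pi_set_def pt_def)

lemma Pi_set_fsym_nonzero:
  assumes "x \<in> Pi_set N" "i \<noteq> j" "x (fsym i j r) \<noteq> 0"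
  shows "x = pt i i j r \<or> x = pt j i j r"
proof -
  obtain a u v w where x: "x = pt a u v w" "u < v" "a = u \<or> a = v"
    using assms(1) unfolding Pi_set_def by auto
  have f: "fsym i j r = fsym u v w"
    using assms(3) x by (auto simp: pt_def split: if_splits)
  then have "pt a u v w = pt a i j r"
    by (simp add: pt_def)
  moreover have "{u, v} = {i, j}"
    using fsym_eq_imp_same_pair[OF f assms(2)] x(2) by simp
  ultimately show ?thesis
    using x by auto
qed

lemma X_ijk_rotate: "X_ijk j k i s t r = X_ijk i j k r s t"
  by (auto simp: Xp_ijk_def Xm_ijk_def)

lemma Xp_ijk_reflect:
  "i \<noteq> j \<Longrightarrow> j \<noteq> k \<Longrightarrow> i \<noteq> k \<Longrightarrow> Xp_ijk j i k (- r) (- t) (- s) = Xm_ijk i j k r s t"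
  by (simp add: Xp_ijk_def Xm_ijk_def pt_swap insert_commute)

lemma Xm_ijk_reflect:
  "i \<noteq> j \<Longrightarrow> j \<noteq> k \<Longrightarrow> i \<noteq> k \<Longrightarrow> Xm_ijk j i k (- r) (- t) (- s) = Xp_ijk i j k r s t"
  by (simp add: Xp_ijk_def Xm_ijk_def pt_swap insert_commute)

lemma X_ijk_reflect:
  "i \<noteq> j \<Longrightarrow> j \<noteq> k \<Longrightarrow> i \<noteq> k \<Longrightarrow> X_ijk j i k (- r) (- t) (- s) = X_ijk i j k r s t"
  by (simp add: Xp_ijk_reflect Xm_ijk_reflect Un_commute)

lemma X_ijk_affine_dependent:
  assumes d: "i \<noteq> j" "j \<noteq> k" "i \<noteq> k"
  shows "affine_dependent (X_ijk i j k r s t)"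
proof -
  let ?S = "X_ijk i j k r s t" and ?m = "pt i k i t"
  let ?H = "affine hull (?S - {?m})"
  have ne_first: "pt i i j r \<noteq> ?m"
  proof
    assume "pt i i j r = ?m"
    then have "pt i i j r (fsym k i t) = ?m (fsym k i t)"
      by simp
    moreover have "fsym k i t \<noteq> fsym i j r"
      using fsym_eq_imp_same_pair[of k i t i j r] d by auto
    ultimately show False
      by (simp add: pt_apply)
  qed
  have ne_other: "pt a u v w \<noteq> ?m" if "a \<noteq> i" for a u v w
    using that by (auto dest: fun_cong[where x = "E i"])
  have "?S - {?m} = {pt i i j r, pt j j k s, pt k k i t, pt j i j r, pt k j k s}"
    using ne_first ne_other d by (auto simp: Xp_ijk_def Xm_ijk_def)
  then have H: "pt i i j r \<in> ?H" "pt j j k s \<in> ?H" "pt k k i t \<in> ?H" "pt j i j r \<in> ?H"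
    "pt k j k s \<in> ?H"
    by (simp_all add: hull_inc)
  \<comment> \<open>the defining dependence, solved for (e_i, f_ki^t)\<close>
  have "?m = (pt i i j r + 1 *\<^sub>R (pt j j k s - pt j i j r)) + 1 *\<^sub>R (pt k k i t - pt k j k s)"
    by (simp add: fun_eq_iff pt_apply)
  also have "\<dots> \<in> ?H"
    using H by (intro mem_affine_3_minus affine_affine_hull)
  finally have "?m \<in> ?H" .
  moreover have "?m \<in> ?S"
    by (simp add: Xm_ijk_def)
  ultimately show ?thesis
    unfolding affine_dependent_def by blast
qed

context
  fixes N :: nat and X :: "(coord \<Rightarrow> real) set" and c :: "(coord \<Rightarrow> real) \<Rightarrow> real"
  assumes X_subset: "X \<subseteq> Pi_set N"
    and coord_sum: "\<And>q. (\<Sum>x\<in>X. c x * x q) = 0"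
    and coeff_nonzero: "\<And>x. x \<in> X \<Longrightarrow> c x \<noteq> 0"
begin

lemma finite_X: "finite X"
  using finite_subset[OF X_subset Pi_set_finite] .

lemma fsym_partner:
  assumes "i \<noteq> j" "pt i i j r \<in> X"
  shows "pt j i j r \<in> X \<and> c (pt j i j r) = - c (pt i i j r)"
proof -
  let ?p = "pt i i j r" and ?q = "pt j i j r"
  have "?p \<noteq> ?q"
    using assms(1) by (auto dest: fun_cong[where x = "E i"])
  have "(\<Sum>x\<in>X \<inter> {?p, ?q}. c x * x (fsym i j r)) = (\<Sum>x\<in>X. c x * x (fsym i j r))"
    using Pi_set_fsym_nonzero[OF _ assms(1)] X_subset
    by (intro sum.mono_neutral_left finite_X) auto
  then have balance: "(\<Sum>x\<in>X \<inter> {?p, ?q}. c x * x (fsym i j r)) = 0"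
    using coord_sum by simp
  show ?thesis
  proof (cases "?q \<in> X")
    case True
    then have "X \<inter> {?p, ?q} = {?p, ?q}"
      using assms(2) by auto
    with balance \<open>?p \<noteq> ?q\<close> True show ?thesis
      by simp
  next
    case False
    then have "X \<inter> {?p, ?q} = {?p}"
      using assms(2) by auto
    with balance coeff_nonzero[OF assms(2)] show ?thesis
      by simp
  qed
qed

lemma E_negative_partner:
  assumes "y \<in> X" "0 < c y" "y (E a) = 1"
  shows "\<exists>x\<in>X. c x < 0 \<and> x (E a) = 1"
proof (rule ccontr)
  assume none: "\<not> ?thesis"
  have "0 < (\<Sum>x\<in>X. c x * x (E a))"
  proof (rule sum_pos2[OF finite_X assms(1)])
    show "0 < c y * y (E a)"
      using assms by simp
    show "0 \<le> c x * x (E a)" if "x \<in> X" for x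
    proof -
      have "x (E a) = 0 \<or> x (E a) = 1"
        using that X_subset Pi_set_coord_01 by blast
      then show ?thesis
        using that none by (cases "c x < 0") auto
    qed
  qed
  with coord_sum show False
    by simp
qed

context
  fixes i j k :: nat and r s t :: int
  assumes distinct: "i \<noteq> j" "j \<noteq> k" "i \<noteq> k"
    and negative_on_hexagon: "\<And>x. x \<in> X \<Longrightarrow> c x < 0 \<Longrightarrow> x \<in> X_ijk i j k r s t"
begin

lemma hexagon_step:
  assumes "i' \<noteq> j'" "pt i' i' j' r' \<in> X" "c (pt i' i' j' r') < 0"
    and "\<And>x. x \<in> X_ijk i j k r s t \<Longrightarrow> x (E j') = 1 \<Longrightarrow> x \<noteq> pt j' i' j' r' \<Longrightarrow> x = z"
  shows "z \<in> X \<and> c z < 0"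
proof -
  have partner: "pt j' i' j' r' \<in> X" "0 < c (pt j' i' j' r')"
    using fsym_partner[OF assms(1,2)] assms(3) by auto
  obtain x where x: "x \<in> X" "c x < 0" "x (E j') = 1"
    using E_negative_partner[OF partner, of j'] by auto
  have "x \<noteq> pt j' i' j' r'"
    using x(2) partner(2) by auto
  then have "x = z"
    using assms(4) negative_on_hexagon[OF x(1,2)] x(3) by blast
  with x show ?thesis
    by simp
qed

lemma hexagon_walk:
  assumes "pt i i j r \<in> X" "c (pt i i j r) < 0"
  shows "X_ijk i j k r s t \<subseteq> X"
proof -
  have at_j: "pt j j k s \<in> X \<and> c (pt j j k s) < 0"
    by (rule hexagon_step[of i j r]) (use assms distinct in \<open>auto simp: Xp_ijk_def Xm_ijk_def\<close>)
  have at_k: "pt k k i t \<in> X \<and> c (pt k k i t) < 0"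
    by (rule hexagon_step[of j k s]) (use at_j distinct in \<open>auto simp: Xp_ijk_def Xm_ijk_def\<close>)
  have "pt j i j r \<in> X" "pt k j k s \<in> X" "pt i k i t \<in> X"
    using fsym_partner[of i j r] fsym_partner[of j k s] fsym_partner[of k i t] assms(1) at_j at_k distinct
    by auto
  with assms(1) at_j at_k show ?thesis
    by (simp add: Xp_ijk_def Xm_ijk_def)
qed

end

lemma hexagon_subset_if_negative:
  assumes distinct: "i \<noteq> j" "j \<noteq> k" "i \<noteq> k"
    and neg: "\<And>x. x \<in> X \<Longrightarrow> c x < 0 \<Longrightarrow> x \<in> X_ijk i j k r s t"
    and m: "m \<in> X" "c m < 0" "m \<in> X_ijk i j k r s t"
  shows "X_ijk i j k r s t \<subseteq> X"
proof -
  have walk: "X_ijk i j k r s t \<subseteq> X"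
    if same: "X_ijk i' j' k' r' s' t' = X_ijk i j k r s t" and start: "m = pt i' i' j' r'"
      and "i' \<noteq> j'" "j' \<noteq> k'" "i' \<noteq> k'" for i' j' k' r' s' t'
  proof -
    have "\<And>x. x \<in> X \<Longrightarrow> c x < 0 \<Longrightarrow> x \<in> X_ijk i' j' k' r' s' t'"
      unfolding same by (rule neg)
    then have "X_ijk i' j' k' r' s' t' \<subseteq> X"
      using m(1,2) unfolding start by (rule hexagon_walk[OF that(3-5)])
    then show ?thesis
      unfolding same .
  qed
  have rot: "X_ijk j k i s t r = X_ijk i j k r s t" "X_ijk k i j t r s = X_ijk i j k r s t"
    using X_ijk_rotate[of i j k r s t] X_ijk_rotate[of k i j t r s] by simp_all
  have reflect: "X_ijk j i k (- r) (- t) (- s) = X_ijk i j k r s t"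
    "X_ijk k j i (- s) (- r) (- t) = X_ijk i j k r s t"
    "X_ijk i k j (- t) (- s) (- r) = X_ijk i j k r s t"
    using X_ijk_reflect[of i j k r t s] X_ijk_reflect[of j k i s r t] X_ijk_reflect[of k i j t s r]
      rot distinct by simp_all
  from m(3) distinct consider "m = pt i i j r" | "m = pt j j k s" | "m = pt k k i t"
    | "m = pt j j i (- r)" | "m = pt k k j (- s)" | "m = pt i i k (- t)"
    by (auto simp: Xp_ijk_def Xm_ijk_def pt_swap)
  then show ?thesis
  proof cases
    case 1
    with distinct show ?thesis by (intro walk[OF HOL.refl]) auto
  next
    case 2
    with distinct show ?thesis by (intro walk[OF rot(1)]) auto
  next
    case 3
    with distinct show ?thesis by (intro walk[OF rot(2)]) auto
  next
    case 4
    with distinct show ?thesis by (intro walk[OF reflect(1)]) auto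
  next
    case 5
    with distinct show ?thesis by (intro walk[OF reflect(2)]) auto
  next
    case 6
    with distinct show ?thesis by (intro walk[OF reflect(3)]) auto
  qed
qed

end

lemma negative_part_not_subset_hexagon:
  assumes circuit: "is_signed_circuit (Pi_set N) Xp Xm"
    and distinct: "i \<noteq> j" "j \<noteq> k" "i \<noteq> k"
    and other: "Xp \<union> Xm \<noteq> X_ijk i j k r s t"
  shows "\<not> Xm \<subseteq> X_ijk i j k r s t"
proof
  assume sub: "Xm \<subseteq> X_ijk i j k r s t"
  let ?X = "Xp \<union> Xm"
  have circ: "is_circuit_set (Pi_set N) ?X"
    using circuit by (simp add: is_signed_circuit_def)
  obtain c where c: "\<And>x. x \<in> ?X \<Longrightarrow> c x \<noteq> 0" "(\<Sum>x\<in>?X. c x) = 0"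
    "(\<Sum>x\<in>?X. c x *\<^sub>R x) = 0" "\<And>x. x \<in> Xm \<longleftrightarrow> x \<in> ?X \<and> c x < 0"
    using is_signed_circuit_dependence[OF circuit] by blast
  have fin: "finite ?X"
    using is_circuit_set_finite[OF circ] .
  have coord_sum: "(\<Sum>x\<in>?X. c x * x q) = 0" for q
    using sum_scaleR_fun_apply[OF fin, of c q] c(3) by simp
  have X_subset: "?X \<subseteq> Pi_set N"
    using circ by (simp add: is_circuit_set_def)
  have negative: "x \<in> X_ijk i j k r s t" if "x \<in> ?X" "c x < 0" for x
    using c(4)[of x] that sub by blast
  obtain m where "m \<in> Xm"
    using is_signed_circuit_negative_nonempty[OF circuit] by blast
  then have m: "m \<in> ?X" "c m < 0" "m \<in> X_ijk i j k r s t"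
    using c(4)[of m] sub by blast+
  have "X_ijk i j k r s t \<subseteq> ?X"
    by (rule hexagon_subset_if_negative[OF X_subset coord_sum c(1) distinct negative m])
  with other have "X_ijk i j k r s t \<subset> ?X"
    by blast
  with circ have "\<not> affine_dependent (X_ijk i j k r s t)"
    unfolding is_circuit_set_def by blast
  with X_ijk_affine_dependent[OF distinct] show False
    by contradiction
qed

theorem proposition4p6:
  fixes N :: nat and i j k :: nat and r s t :: int
    and T T' L :: "(coord \<Rightarrow> real) set set" and Xp Xm :: "(coord \<Rightarrow> real) set"
  assumes "N \<ge> 1"
    and "is_triangulation (Pi_set N) T"
    and "i \<in> {1..4}" "j \<in> {1..4}" "k \<in> {1..4}" "i \<noteq> j" "j \<noteq> k" "i \<noteq> k"
    and "\<bar>r\<bar> \<le> int N" "\<bar>s\<bar> \<le> int N" "\<bar>t\<bar> \<le> int N"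
    and "T_ijk i j k r s t \<subseteq> T"
    and "is_signed_circuit (Pi_set N) Xp Xm"
    and "Xp \<union> Xm \<noteq> Xp_ijk i j k r s t \<union> Xm_ijk i j k r s t"
    and "flip_with_link T Xp Xm L"
    and "T' = flip_result T Xp Xm L"
  shows "T_ijk i j k r s t \<subseteq> T'"
proof
  fix \<tau> assume \<tau>: "\<tau> \<in> T_ijk i j k r s t"
  have "\<not> Xm \<subseteq> X_ijk i j k r s t"
    by (rule negative_part_not_subset_hexagon[OF assms(13,6-8,14)])
  moreover have "\<tau> \<subseteq> X_ijk i j k r s t"
    using \<tau> by (simp add: T_ijk_def T_plus_def)
  moreover have "\<tau> \<in> T"
    using \<tau> assms(12) by blast
  ultimately show "\<tau> \<in> T'"
    unfolding assms(16) by (intro flip_result_keeps)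
qed

end
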